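(* Consider $S^1\times S^3$ with $S^1\subset\mathbb{C}$ the unit circle and $S^3\subset\mathbb{R}^4$, and the four free involutions $\tau_a(t,v)=(-t,v)$, $\tau_b(t,v)=(-t,r(v))$ with $r$ a hyperplane reflection of $\mathbb{R}^4$, $\tau_c(t,v)=(t,-v)$, and $\tau_d(t,v)=(\overline t,-v)$, whose orbit spaces are respectively $S^1\times S^3$, the nonorientable $S^3$-bundle $S^1\tilde\times S^3$, $S^1\times\mathbb{R}P^3$ and $\mathbb{R}P^4\#\mathbb{R}P^4$. Then $\mathrm{ind}_{\mathbb{Z}_2}(S^1\times S^3,\tau_a)=\mathrm{ind}_{\mathbb{Z}_2}(S^1\times S^3,\tau_b)=1$ and $\mathrm{ind}_{\mathbb{Z}_2}(S^1\times S^3,\tau_c)=\mathrm{ind}_{\mathbb{Z}_2}(S^1\times S^3,\tau_d)=3$.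
   Context: $\mathrm{ind}_{\mathbb{Z}_2}(X,\tau)=\min\{n:\exists$ a map $f:X\to S^n$ with $f\circ\tau=-f\}$. *)

theory Defs
  imports "HOL-Analysis.Analysis"
begin

text \<open>S^n is the library's nsphere n (unit sphere in the first n+1 coordinates).\<close>
definition ind_Z2 :: "'a topology \<Rightarrow> ('a \<Rightarrow> 'a) \<Rightarrow> nat" where
  "ind_Z2 X tau = (LEAST n. \<exists>f. continuous_map X (nsphere n) f \<and>
      (\<forall>x\<in>topspace X. f (tau x) = (\<lambda>i. - f x i)))"

definition S1S3 :: "(complex \<times> (real^4)) topology" where
  "S1S3 = subtopology euclidean (Sigma (sphere (0::complex) 1) (\<lambda>_. sphere (0::real^4) 1))"

definition tau_a :: "complex \<times> (real^4) \<Rightarrow> complex \<times> (real^4)" where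
  "tau_a = (\<lambda>(t,v). (-t, v))"

definition refl :: "real^4 \<Rightarrow> real^4 \<Rightarrow> real^4" where
  "refl u v = v - (2 * (v \<bullet> u)) *\<^sub>R u"

definition tau_b :: "real^4 \<Rightarrow> complex \<times> (real^4) \<Rightarrow> complex \<times> (real^4)" where
  "tau_b u = (\<lambda>(t,v). (-t, refl u v))"

definition tau_c :: "complex \<times> (real^4) \<Rightarrow> complex \<times> (real^4)" where
  "tau_c = (\<lambda>(t,v). (t, -v))"

definition tau_d :: "complex \<times> (real^4) \<Rightarrow> complex \<times> (real^4)" where
  "tau_d = (\<lambda>(t,v). (cnj t, -v))"

end

theory Submission
  imports Defs "HOL-Homology.Homology"
begin

text \<open>
  For \<open>\<tau>\<^sub>a\<close> and \<open>\<tau>\<^sub>b\<close> the projection to the circle factor is equivariant, so the index is at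
  most \<open>1\<close>; it is not \<open>0\<close> because \<open>S\<^sup>1 \<times> S\<^sup>3\<close> is connected. For \<open>\<tau>\<^sub>c\<close> and \<open>\<tau>\<^sub>d\<close> the projection
  to \<open>S\<^sup>3\<close> gives the bound \<open>3\<close>; conversely both involutions act antipodally on the invariant
  fibre \<open>{1} \<times> S\<^sup>3\<close>, so an equivariant map to \<open>S\<^sup>m\<close> with \<open>m < 3\<close> would restrict to an odd map
  \<open>S\<^sup>3 \<rightarrow> S\<^sup>2\<close>, contradicting Borsuk-Ulam.

  Borsuk-Ulam is derived from the mod 2 degree: an odd self-map of \<open>S\<^sup>n\<close> has odd degree. After a
  polynomial approximation, a shear in general position and a flattening near the equator, an odd
  map is homotopic to an odd map preserving the equator \<open>S\<^sup>n\<^sup>-\<^sup>1\<close>, and for such maps the degrees in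
  dimensions \<open>n\<close> and \<open>n - 1\<close> have the same parity. An odd map \<open>S\<^sup>n\<^sup>+\<^sup>1 \<rightarrow> S\<^sup>n\<close>, seen as a self-map
  of \<open>S\<^sup>n\<^sup>+\<^sup>1\<close>, would then have odd degree although it is not surjective.
\<close>

section \<open>Spheres in coordinates\<close>

lemma topspace_nsphere_iff:
  "x \<in> topspace (nsphere n) \<longleftrightarrow> (\<Sum>i\<le>n. x i ^ 2) = 1 \<and> (\<forall>i>n. x i = 0)"
  by (simp add: nsphere)

lemma topspace_nsphere_mono:
  assumes "m \<le> n" "x \<in> topspace (nsphere m)"
  shows "x \<in> topspace (nsphere n)"
proof -
  have "(\<Sum>i\<le>n. x i ^ 2) = (\<Sum>i\<le>m. x i ^ 2)"
    using assms by (intro sum.mono_neutral_right) (auto simp: topspace_nsphere_iff)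
  then show ?thesis using assms by (auto simp: topspace_nsphere_iff)
qed

lemma subtopology_nsphere_mono:
  assumes "m \<le> n"
  shows "subtopology (nsphere n) (topspace (nsphere m)) = nsphere m"
proof -
  have "{x. (\<Sum>i\<le>n. x i ^ 2) = 1 \<and> (\<forall>i>n. x i = 0)} \<inter> topspace (nsphere m)
      = {x. (\<Sum>i\<le>m. x i ^ 2) = 1 \<and> (\<forall>i>m. x i = 0)}"
    using topspace_nsphere_mono[OF assms] by (auto simp: topspace_nsphere_iff)
  then show ?thesis
    by (simp add: nsphere[of n] nsphere[of m] subtopology_subtopology)
qed

lemma continuous_map_nsphere_mono:
  "continuous_map X (nsphere m) f \<Longrightarrow> m \<le> n \<Longrightarrow> continuous_map X (nsphere n) f"
  by (metis continuous_map_in_subtopology subtopology_nsphere_mono)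

lemma continuous_map_nsphere_restrict:
  assumes "continuous_map (nsphere n) (nsphere n) f" "m \<le> n"
    and "f \<in> topspace (nsphere m) \<rightarrow> topspace (nsphere m)"
  shows "continuous_map (nsphere m) (nsphere m) f"
  using assms subtopology_nsphere_mono[OF assms(2)]
  by (metis continuous_map_from_subtopology continuous_map_in_subtopology image_subset_iff_funcset
      topspace_subtopology_subset)

text \<open>An enumeration \<open>e\<close> of \<open>Basis\<close> identifies \<open>nsphere n\<close> with the unit sphere of a
  euclidean space of dimension \<open>n + 1\<close>.\<close>

definition from_coords :: "(nat \<Rightarrow> 'a::euclidean_space) \<Rightarrow> nat \<Rightarrow> (nat \<Rightarrow> real) \<Rightarrow> 'a" where
  "from_coords e n x = (\<Sum>i\<le>n. x i *\<^sub>R e i)"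

definition coords :: "(nat \<Rightarrow> 'a::euclidean_space) \<Rightarrow> nat \<Rightarrow> 'a \<Rightarrow> nat \<Rightarrow> real" where
  "coords e n v = (\<lambda>i. if i \<le> n then v \<bullet> e i else 0)"

lemma obtain_Basis_enumeration:
  assumes "DIM('a) = Suc n"
  obtains e :: "nat \<Rightarrow> 'a::euclidean_space" where "bij_betw e {..n} Basis"
proof -
  obtain e :: "nat \<Rightarrow> 'a" where "bij_betw e {0..<DIM('a)} Basis"
    using ex_bij_betw_nat_finite[OF finite_Basis] by blast
  moreover have "{0..<DIM('a)} = {..n}" using assms by auto
  ultimately show thesis using that by simp
qed

context
  fixes e :: "nat \<Rightarrow> 'a::euclidean_space" and n :: nat
  assumes e: "bij_betw e {..n} Basis"
begin

lemma inner_Basis_enumeration: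
  assumes "i \<le> n" "j \<le> n"
  shows "e i \<bullet> e j = (if i = j then 1 else 0)"
proof -
  have "e i \<in> Basis" "e j \<in> Basis" "e i = e j \<longleftrightarrow> i = j"
    using assms e by (auto simp: bij_betw_def inj_on_eq_iff)
  then show ?thesis by (simp add: inner_Basis)
qed

lemma inner_from_coords_Basis:
  "j \<le> n \<Longrightarrow> from_coords e n x \<bullet> e j = x j"
  by (simp add: from_coords_def inner_sum_left inner_Basis_enumeration if_distrib cong: if_cong)

lemma coords_from_coords:
  "(\<forall>i>n. x i = 0) \<Longrightarrow> coords e n (from_coords e n x) = x"
  by (auto simp: coords_def inner_from_coords_Basis fun_eq_iff)

lemma from_coords_coords [simp]: "from_coords e n (coords e n v) = v"
proof -
  have "from_coords e n (coords e n v) = (\<Sum>i\<le>n. (v \<bullet> e i) *\<^sub>R e i)"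
    by (simp add: from_coords_def coords_def)
  also have "\<dots> = (\<Sum>b\<in>Basis. (v \<bullet> b) *\<^sub>R b)"
    using sum.reindex_bij_betw[OF e, of "\<lambda>b. (v \<bullet> b) *\<^sub>R b"] .
  also have "\<dots> = v" by (rule euclidean_representation)
  finally show ?thesis .
qed

lemma inner_from_coords:
  "from_coords e n x \<bullet> from_coords e n y = (\<Sum>i\<le>n. x i * y i)"
  by (simp add: from_coords_def[of e n y] inner_sum_right inner_from_coords_Basis mult.commute)

lemma from_coords_in_sphere: "x \<in> topspace (nsphere n) \<Longrightarrow> from_coords e n x \<in> sphere 0 1"
  by (simp add: nsphere norm_eq_1 inner_from_coords power2_eq_square)

lemma coords_in_nsphere: "v \<in> sphere 0 1 \<Longrightarrow> coords e n v \<in> topspace (nsphere n)"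
  using inner_from_coords[of "coords e n v" "coords e n v"]
  by (simp add: nsphere norm_eq_1 power2_eq_square) (simp add: coords_def)

lemma continuous_map_from_coords:
  "continuous_map (nsphere n) (top_of_set (sphere 0 1)) (from_coords e n)"
proof -
  have "continuous_map (nsphere n) euclidean (\<lambda>x. x i *\<^sub>R e i)" for i
    using continuous_map_nsphere_projection by (simp add: continuous_map_atin tendsto_scaleR)
  then have "continuous_map (nsphere n) euclidean (from_coords e n)"
    unfolding from_coords_def[abs_def] by (intro continuous_map_sum) auto
  then show ?thesis
    using from_coords_in_sphere by (auto simp: continuous_map_in_subtopology)
qed

lemma continuous_map_coords:
  "continuous_map (top_of_set (sphere 0 1)) (nsphere n) (coords e n)"
proof -
  have "continuous_map (top_of_set (sphere 0 1)) euclideanreal (\<lambda>v. coords e n v i)" for i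
    by (auto simp: coords_def continuous_map_iff_continuous intro!: continuous_intros)
  then show ?thesis
    using coords_in_nsphere unfolding nsphere continuous_map_in_subtopology
    by (auto simp: continuous_map_componentwise_UNIV topspace_nsphere_iff)
qed

end

lemma from_coords_neg: "from_coords e n (\<lambda>i. - x i) = - from_coords e n x"
  by (simp add: from_coords_def sum_negf)

lemma coords_neg: "coords e n (- v) = (\<lambda>i. - coords e n v i)"
  by (simp add: coords_def fun_eq_iff)

lemma inner_from_coords_equator:
  assumes "bij_betw e {..Suc n} Basis" "x \<in> topspace (nsphere n)"
  shows "from_coords e (Suc n) x \<bullet> e (Suc n) = 0"
  using assms by (simp add: inner_from_coords_Basis topspace_nsphere_iff)

lemma coords_in_nsphere_equator:
  assumes e: "bij_betw e {..Suc n} Basis" and "v \<in> sphere 0 1" "v \<bullet> e (Suc n) = 0"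
  shows "coords e (Suc n) v \<in> topspace (nsphere n)"
  using topspace_nsphere_minus1[OF coords_in_nsphere[OF assms(1,2)]] assms(3)
  by (simp add: coords_def)

section \<open>Odd maps and the mod 2 degree\<close>

definition antipodal :: "nat \<Rightarrow> ((nat \<Rightarrow> real) \<Rightarrow> nat \<Rightarrow> real) \<Rightarrow> bool" where
  "antipodal n f \<longleftrightarrow> (\<forall>x\<in>topspace (nsphere n). f (\<lambda>i. - x i) = (\<lambda>i. - f x i))"

lemma antipodal_mono: "antipodal n f \<Longrightarrow> m \<le> n \<Longrightarrow> antipodal m f"
  using topspace_nsphere_mono by (auto simp: antipodal_def)

lemma odd_Brouwer_degree2_antipodal_0:
  assumes f: "continuous_map (nsphere 0) (nsphere 0) f" and "antipodal 0 f"
  shows "odd (Brouwer_degree2 0 f)"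
proof -
  define e where "e = (\<lambda>i::nat. if i = 0 then 1 else (0::real))"
  have S0: "x \<in> topspace (nsphere 0) \<longleftrightarrow> x = e \<or> x = (\<lambda>i. - e i)" for x
    by (auto simp: topspace_nsphere_iff e_def fun_eq_iff power2_eq_1_iff)
  have "f e \<in> topspace (nsphere 0)"
    using f S0 by (auto simp: continuous_map_def)
  then have "f e = e \<or> f e = (\<lambda>i. - e i)"
    by (simp add: S0)
  moreover have f_neg: "f (\<lambda>i. - e i) = (\<lambda>i. - f e i)"
    using \<open>antipodal 0 f\<close> S0 by (simp add: antipodal_def)
  \<comment> \<open>on \<open>S\<^sup>0\<close> an odd map is either the identity or the reflection in the \<open>0\<close>-th coordinate\<close>
  ultimately show ?thesis
  proof (elim disjE)
    assume "f e = e"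
    then have "Brouwer_degree2 0 f = Brouwer_degree2 0 id"
      using f_neg by (intro Brouwer_degree2_eq) (auto simp: S0)
    then show ?thesis by simp
  next
    assume "f e = (\<lambda>i. - e i)"
    moreover have "(\<lambda>i. if i = 0 then - e i else e i) = (\<lambda>i. - e i)"
      "(\<lambda>i. if i = 0 then - (- e i) else - e i) = e"
      by (auto simp: e_def fun_eq_iff)
    ultimately have "Brouwer_degree2 0 f = Brouwer_degree2 0 (\<lambda>x i. if i = 0 then - x i else x i)"
      using f_neg by (intro Brouwer_degree2_eq) (auto simp: S0)
    then show ?thesis by (simp add: Brouwer_degree2_reflection)
  qed
qed

lemma odd_Brouwer_degree2_Suc:
  assumes f: "continuous_map (nsphere (Suc n)) (nsphere (Suc n)) f" "antipodal (Suc n) f"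
    and equator: "f \<in> topspace (nsphere n) \<rightarrow> topspace (nsphere n)"
    and odd_n: "odd (Brouwer_degree2 n f)"
  shows "odd (Brouwer_degree2 (Suc n) f)"
proof -
  have "even (Brouwer_degree2 (Suc n) f - Brouwer_degree2 (Suc n - Suc 0) f)"
    using f equator by (intro Borsuk_odd_mapping_degree_step) (auto simp: antipodal_def)
  with odd_n show ?thesis by simp
qed

section \<open>Deforming odd maps of spheres to preserve the equator\<close>

lemma odd_polynomial_approximation:
  fixes K :: "'a::euclidean_space \<Rightarrow> 'b::euclidean_space"
  assumes "compact S" "continuous_on S K" "\<And>x. x \<in> S \<Longrightarrow> - x \<in> S"
    and K_odd: "\<And>x. x \<in> S \<Longrightarrow> K (- x) = - K x" and "0 < \<epsilon>"
  obtains Q where "polynomial_function Q" "\<And>x. Q (- x) = - Q x"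
    "\<And>x. x \<in> S \<Longrightarrow> norm (K x - Q x) < \<epsilon>"
proof -
  obtain P where P: "polynomial_function P" and P_close: "\<And>x. x \<in> S \<Longrightarrow> norm (K x - P x) < \<epsilon>"
    using Stone_Weierstrass_polynomial_function[OF assms(1,2,5)] by blast
  define Q where "Q x = (1/2) *\<^sub>R (P x - P (- x))" for x
  have "polynomial_function (\<lambda>x. P (- x))"
    using polynomial_function_compose[OF polynomial_function_minus[OF polynomial_function_id] P]
    by (simp add: o_def)
  with P have "polynomial_function Q"
    unfolding Q_def by (intro polynomial_function_cmul polynomial_function_diff)
  moreover have "Q (- x) = - Q x" for x
    by (simp add: Q_def algebra_simps)
  moreover have "norm (K x - Q x) < \<epsilon>" if x: "x \<in> S" for x
  proof -
    have "K x - Q x = (1/2) *\<^sub>R ((K x - P x) - (K (- x) - P (- x)))"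
      by (simp add: Q_def K_odd[OF x] algebra_simps) (simp flip: scaleR_add_left)
    then have "norm (K x - Q x) \<le> (1/2) * (norm (K x - P x) + norm (K (- x) - P (- x)))"
      by (simp add: norm_triangle_ineq4)
    also have "\<dots> < (1/2) * (\<epsilon> + \<epsilon>)"
      using P_close x assms(3) by (intro mult_strict_left_mono add_strict_mono) auto
    finally show ?thesis by simp
  qed
  ultimately show ?thesis using that by blast
qed

lemma homotopic_with_canon_normalized:
  fixes h :: "real \<times> 'a::topological_space \<Rightarrow> 'b::real_normed_vector"
  assumes "continuous_on ({0..1} \<times> S) h" and "\<And>p. p \<in> {0..1} \<times> S \<Longrightarrow> h p \<noteq> 0"
  shows "homotopic_with_canon (\<lambda>x. True) S (sphere 0 1)
           (\<lambda>x. h (0, x) /\<^sub>R norm (h (0, x))) (\<lambda>x. h (1, x) /\<^sub>R norm (h (1, x)))"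
  unfolding homotopic_with_def
proof (intro exI conjI)
  have eq: "prod_topology (top_of_set {0..1::real}) (top_of_set S) = top_of_set ({0..1} \<times> S)"
    by (simp add: prod_topology_subtopology subtopology_subtopology Times_Int_Times)
  show "continuous_map (prod_topology (top_of_set {0..1}) (top_of_set S)) (top_of_set (sphere 0 1))
            (\<lambda>p. h p /\<^sub>R norm (h p))"
    unfolding eq continuous_map_subtopology_eu
  proof
    show "continuous_on ({0..1} \<times> S) (\<lambda>p. h p /\<^sub>R norm (h p))"
      using assms by (intro continuous_on_scaleR continuous_on_inverse continuous_on_norm) auto
  qed (use assms(2) in auto)
qed auto

lemma homotopic_sphere_map_normalized_approximation:
  fixes K Q :: "'a::topological_space \<Rightarrow> 'b::real_normed_vector"
  assumes "continuous_on S K" "K \<in> S \<rightarrow> sphere 0 1" "continuous_on S Q"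
    and close: "\<And>x. x \<in> S \<Longrightarrow> norm (K x - Q x) < 1"
  shows "homotopic_with_canon (\<lambda>x. True) S (sphere 0 1) K (\<lambda>x. Q x /\<^sub>R norm (Q x))"
proof -
  define h where "h p = (1 - fst p) *\<^sub>R K (snd p) + fst p *\<^sub>R Q (snd p)" for p :: "real \<times> 'a"
  have "continuous_on ({0..1} \<times> S) (\<lambda>p. K (snd p))" "continuous_on ({0..1} \<times> S) (\<lambda>p. Q (snd p))"
    by (auto intro: continuous_on_compose2[OF assms(1) continuous_on_snd]
        continuous_on_compose2[OF assms(3) continuous_on_snd])
  then have "continuous_on ({0..1} \<times> S) h"
    unfolding h_def by (intro continuous_intros)
  moreover have "h (t, x) \<noteq> 0" if "t \<in> {0..1}" "x \<in> S" for t x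
  proof
    assume "h (t, x) = 0"
    then have "K x = t *\<^sub>R (K x - Q x)"
      by (simp add: h_def algebra_simps)
    then have "norm (K x) = \<bar>t\<bar> * norm (K x - Q x)"
      by (metis norm_scaleR)
    also have "\<dots> \<le> norm (K x - Q x)"
      using that(1) by (simp add: mult_left_le_one_le)
    also have "\<dots> < 1"
      using close[OF that(2)] .
    finally show False using assms(2) that(2) by (auto simp: Pi_iff)
  qed
  ultimately have "homotopic_with_canon (\<lambda>x. True) S (sphere 0 1)
      (\<lambda>x. h (0, x) /\<^sub>R norm (h (0, x))) (\<lambda>x. h (1, x) /\<^sub>R norm (h (1, x)))"
    by (intro homotopic_with_canon_normalized) auto
  then show ?thesis
    by (rule homotopic_with_eq) (use assms(2) in \<open>auto simp: h_def Pi_iff\<close>)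
qed

lemma differentiable_on_homogeneous_extension:
  fixes Q :: "'a::euclidean_space \<Rightarrow> 'b::euclidean_space"
  assumes "polynomial_function Q" "0 \<notin> S"
  shows "(\<lambda>x. norm x *\<^sub>R Q (x /\<^sub>R norm x)) differentiable_on S"
  unfolding differentiable_on_def
proof
  fix x assume "x \<in> S"
  then have x: "x \<noteq> 0" using assms(2) by auto
  have "(\<lambda>x. inverse (norm x) *\<^sub>R x) differentiable (at x)"
    using x by (intro differentiable_scaleR differentiable_inverse differentiable_norm_at
        differentiable_ident) auto
  with differentiable_at_polynomial_function[OF assms(1)]
  have "(\<lambda>x. Q (x /\<^sub>R norm x)) differentiable (at x)"
    by (rule differentiable_compose)
  then show "(\<lambda>x. norm x *\<^sub>R Q (x /\<^sub>R norm x)) differentiable (at x within S)"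
    using x by (intro differentiable_at_withinI[OF differentiable_scaleR] differentiable_norm_at)
qed

lemma negligible_cone_over_equator:
  fixes Q :: "'a::euclidean_space \<Rightarrow> 'a"
  assumes "polynomial_function Q" and Q_odd: "\<And>x. Q (- x) = - Q x" and "b \<noteq> 0"
  shows "negligible {r *\<^sub>R Q x | r x. x \<in> sphere 0 1 \<and> x \<bullet> b = 0}"
proof -
  \<comment> \<open>the cone is swept out by a map that is differentiable on the punctured hyperplane\<close>
  define g where "g x = norm x *\<^sub>R Q (x /\<^sub>R norm x)" for x :: 'a
  define H where "H = {x. b \<bullet> x = 0} - {0}"
  have "negligible {x. b \<bullet> x = 0}"
    using negligible_hyperplane[of b 0] assms(3) by simp
  then have "negligible H"
    by (rule negligible_subset) (auto simp: H_def)
  moreover have "g differentiable_on H"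
    unfolding g_def H_def by (rule differentiable_on_homogeneous_extension[OF assms(1)]) simp
  ultimately have neg: "negligible (insert 0 (g ` H))"
    by (simp add: negligible_differentiable_image_negligible)
  have "r *\<^sub>R Q x \<in> insert 0 (g ` H)" if "x \<in> sphere 0 1" "x \<bullet> b = 0" for r x
  proof (cases "r = 0")
    case False
    have "g (r *\<^sub>R x) = r *\<^sub>R Q x"
    proof (cases "r > 0")
      case True then show ?thesis using that by (simp add: g_def)
    next
      case False
      then have "r < 0" using \<open>r \<noteq> 0\<close> by simp
      then show ?thesis using that by (simp add: g_def Q_odd)
    qed
    moreover have "r *\<^sub>R x \<in> H" using that False by (auto simp: H_def inner_commute)
    ultimately show ?thesis by (metis image_eqI insertI2)
  qed simp
  then have "{r *\<^sub>R Q x | r x. x \<in> sphere 0 1 \<and> x \<bullet> b = 0} \<subseteq> insert 0 (g ` H)"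
    by blast
  with neg show ?thesis by (rule negligible_subset)
qed

text \<open>For \<open>t\<close> from \<open>0\<close> to \<open>1\<close>, \<open>shear b y t\<close> deforms the identity into the linear map that fixes
  the orthogonal complement of \<open>y\<close> and sends \<open>y\<close> to \<open>norm y *\<^sub>R b\<close>.\<close>

definition shear :: "'a::real_inner \<Rightarrow> 'a \<Rightarrow> real \<Rightarrow> 'a \<Rightarrow> 'a" where
  "shear b y t z = z + (t * (z \<bullet> y / (y \<bullet> y))) *\<^sub>R (norm y *\<^sub>R b - y)"

lemma linear_shear: "linear (shear b y t)"
  by (auto simp: linear_iff shear_def inner_add_left algebra_simps add_divide_distrib)

lemma shear_self: "y \<noteq> 0 \<Longrightarrow> shear b y 1 y = norm y *\<^sub>R b"
  by (simp add: shear_def)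

lemma shear_eq_0_iff:
  assumes b: "norm b = 1" and yb: "y \<bullet> b > 0" and t: "0 \<le> t" "t \<le> 1"
  shows "shear b y t z = 0 \<longleftrightarrow> z = 0"
proof
  assume shear0: "shear b y t z = 0"
  have "y \<noteq> 0" using yb by auto
  then have ny: "norm y > 0" by simp
  define a where "a = z \<bullet> y"
  define q where "q = y \<bullet> y"
  have q: "q = norm y ^ 2" by (simp add: q_def power2_norm_eq_inner)
  have z: "z = - (t * (a / q)) *\<^sub>R (norm y *\<^sub>R b - y)"
    using shear0 by (simp add: shear_def a_def q_def eq_neg_iff_add_eq_0)
  \<comment> \<open>the inner product with \<open>y\<close> gives \<open>a * (q + t * d) = 0\<close>, and \<open>q + t * d > 0\<close>\<close>
  define d where "d = norm y * (y \<bullet> b) - q"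
  have "a = - (t * (a / q)) * d"
    by (subst a_def, subst z) (simp add: d_def q_def inner_diff_right inner_commute)
  then have "a * (q + t * d) = 0"
    using ny by (simp add: q field_simps)
  moreover have "q + t * d = norm y * ((1 - t) * norm y + t * (y \<bullet> b))"
    by (simp add: d_def q power2_eq_square algebra_simps)
  moreover have "(1 - t) * norm y + t * (y \<bullet> b) > 0"
    using t ny yb by (cases "t = 0") (auto intro: add_nonneg_pos)
  ultimately have "a = 0" using ny by simp
  then show "z = 0" using z by simp
qed (simp add: shear_def)

lemma shear_avoiding_axis:
  fixes Q :: "'a::euclidean_space \<Rightarrow> 'a"
  assumes "polynomial_function Q" "\<And>x. Q (- x) = - Q x" and b: "norm b = 1"
    and Q_nz: "\<And>x. x \<in> sphere 0 1 \<Longrightarrow> x \<bullet> b = 0 \<Longrightarrow> Q x \<noteq> 0"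
  obtains y where "y \<bullet> b > 0" "\<And>x. x \<in> sphere 0 1 \<Longrightarrow> x \<bullet> b = 0 \<Longrightarrow> shear b y 1 (Q x) \<notin> span {b}"
proof -
  \<comment> \<open>\<open>shear b y 1\<close> maps the line through \<open>y\<close> onto the line through \<open>b\<close>, so \<open>y\<close> must avoid the cone\<close>
  let ?N = "{r *\<^sub>R Q x | r x. x \<in> sphere 0 1 \<and> x \<bullet> b = 0}"
  have "b \<noteq> 0" using b by auto
  then have "negligible (insert 0 ?N)"
    using negligible_cone_over_equator[OF assms(1,2)] by simp
  moreover have "\<not> negligible (ball b (1/2))"
    by (simp add: open_not_negligible)
  ultimately obtain y where y: "y \<in> ball b (1/2)" "y \<notin> ?N" "y \<noteq> 0"
    by (metis (no_types, lifting) insert_iff negligible_subset subsetI)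
  have "1 - y \<bullet> b = (b - y) \<bullet> b"
    using b by (simp add: inner_diff_left norm_eq_1)
  also have "\<dots> \<le> norm (b - y)"
    using b norm_cauchy_schwarz[of "b - y" b] by simp
  also have "\<dots> < 1/2" using y(1) by (simp add: dist_norm)
  finally have yb: "y \<bullet> b > 0" by simp
  moreover have "shear b y 1 (Q x) \<notin> span {b}" if x: "x \<in> sphere 0 1" "x \<bullet> b = 0" for x
  proof
    assume "shear b y 1 (Q x) \<in> span {b}"
    then obtain r where r: "shear b y 1 (Q x) = r *\<^sub>R b"
      by (auto simp: span_singleton)
    have "shear b y 1 (Q x - (r / norm y) *\<^sub>R y) = 0"
      using r shear_self[OF y(3), of b] y(3)
      by (simp add: linear_diff[OF linear_shear] linear_scale[OF linear_shear])
    then have Qx: "Q x = (r / norm y) *\<^sub>R y"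
      using shear_eq_0_iff[OF b yb] by simp
    then have "r \<noteq> 0" using Q_nz[OF x] by auto
    then have "y = (norm y / r) *\<^sub>R Q x" using Qx y(3) by simp
    then show False using y(2) x by blast
  qed
  ultimately show ?thesis using that by blast
qed

lemma compact_strict_upper_bound:
  fixes f :: "'a::topological_space \<Rightarrow> real"
  assumes "compact E" "continuous_on E f" "\<And>x. x \<in> E \<Longrightarrow> f x < a"
  obtains c where "c < a" "\<And>x. x \<in> E \<Longrightarrow> f x \<le> c"
proof (cases "E = {}")
  case False
  then obtain x0 where "x0 \<in> E" "\<And>x. x \<in> E \<Longrightarrow> f x \<le> f x0"
    using continuous_attains_sup[OF assms(1) False assms(2)] by blast
  then show ?thesis using assms(3) that by blast
qed (use that[of "a - 1"] in auto)

definition flatten :: "real \<Rightarrow> real \<Rightarrow> real" where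
  "flatten c s = (max 0 (s - c) + min 0 (s + c)) / (1 - c)"

lemma flatten_neg: "flatten c (- s) = - flatten c s"
  by (simp add: flatten_def max_def min_def divide_simps)

lemma flatten_eq_0: "\<bar>s\<bar> \<le> c \<Longrightarrow> flatten c s = 0"
  by (simp add: flatten_def max_def min_def abs_le_iff)

lemma flatten_pole: "0 \<le> c \<Longrightarrow> c < 1 \<Longrightarrow> \<bar>s\<bar> = 1 \<Longrightarrow> flatten c s = s"
  by (auto simp: flatten_def max_def min_def divide_simps abs_if split: if_splits)

lemma continuous_on_flatten:
  "continuous_on A f \<Longrightarrow> c \<noteq> 1 \<Longrightarrow> continuous_on A (\<lambda>x. flatten c (f x))"
  unfolding flatten_def by (intro continuous_intros) auto

lemma homotopic_odd_map_flattening_equator: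
  fixes P :: "'a::real_normed_vector \<Rightarrow> 'b::real_inner"
  assumes P: "continuous_on S P" "P \<in> S \<rightarrow> sphere 0 1" and P_odd: "\<And>x. x \<in> S \<Longrightarrow> P (- x) = - P x"
    and E: "compact E" "E \<subseteq> S" and b: "norm b = 1"
    and off_poles: "\<And>x. x \<in> E \<Longrightarrow> \<bar>P x \<bullet> b\<bar> < 1"
  obtains G where "homotopic_with_canon (\<lambda>x. True) S (sphere 0 1) P G"
    "\<And>x. x \<in> S \<Longrightarrow> G (- x) = - G x" "\<And>x. x \<in> E \<Longrightarrow> G x \<bullet> b = 0"
proof -
  have "continuous_on E (\<lambda>x. \<bar>P x \<bullet> b\<bar>)"
    using continuous_on_subset[OF P(1) E(2)] by (intro continuous_intros)
  then obtain c0 where "c0 < 1" and c0: "\<And>x. x \<in> E \<Longrightarrow> \<bar>P x \<bullet> b\<bar> \<le> c0"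
    using compact_strict_upper_bound[of E "\<lambda>x. \<bar>P x \<bullet> b\<bar>" 1, OF E(1) _ off_poles] by blast
  define c where "c = max 0 c0"
  have c: "0 \<le> c" "c < 1" using \<open>c0 < 1\<close> by (auto simp: c_def)
  define H where "H p = P (snd p) + (fst p * (flatten c (P (snd p) \<bullet> b) - P (snd p) \<bullet> b)) *\<^sub>R b"
    for p :: "real \<times> 'a"
  have "continuous_on ({0..1} \<times> S) (\<lambda>p. P (snd p))"
    by (rule continuous_on_compose2[OF P(1) continuous_on_snd]) auto
  moreover from this have "continuous_on ({0..1} \<times> S) (\<lambda>p. flatten c (P (snd p) \<bullet> b))"
    using c by (intro continuous_on_flatten continuous_intros) auto
  ultimately have "continuous_on ({0..1} \<times> S) H"
    unfolding H_def by (intro continuous_intros)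
  moreover have "H (t, x) \<noteq> 0" if "x \<in> S" for t x
  proof
    assume "H (t, x) = 0"
    then have Px: "P x = - (t * (flatten c (P x \<bullet> b) - P x \<bullet> b)) *\<^sub>R b"
      by (simp add: H_def eq_neg_iff_add_eq_0)
    have "norm (P x) = 1" using P(2) that by (auto simp: Pi_iff)
    then have "\<bar>P x \<bullet> b\<bar> = 1"
      using b by (subst (asm) Px, subst Px) (simp add: norm_eq_1)
    with Px c have "P x = 0" by (simp add: flatten_pole)
    with \<open>norm (P x) = 1\<close> show False by simp
  qed
  ultimately have "homotopic_with_canon (\<lambda>x. True) S (sphere 0 1)
      (\<lambda>x. H (0, x) /\<^sub>R norm (H (0, x))) (\<lambda>x. H (1, x) /\<^sub>R norm (H (1, x)))"
    by (intro homotopic_with_canon_normalized) auto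
  then have "homotopic_with_canon (\<lambda>x. True) S (sphere 0 1) P (\<lambda>x. H (1, x) /\<^sub>R norm (H (1, x)))"
    by (rule homotopic_with_eq) (use P(2) in \<open>auto simp: H_def Pi_iff\<close>)
  moreover have "H (1, - x) = - H (1, x)" if "x \<in> S" for x
    using that by (simp add: H_def P_odd flatten_neg algebra_simps)
  moreover have "H (1, x) \<bullet> b = 0" if "x \<in> E" for x
    using b c0[OF that] by (simp add: H_def c_def flatten_eq_0 inner_diff_left norm_eq_1)
  ultimately show ?thesis
    using that[of "\<lambda>x. H (1, x) /\<^sub>R norm (H (1, x))"] by simp
qed

lemma unit_vector_in_span_if_inner_abs_1:
  fixes u b :: "'a::real_inner"
  assumes "norm u = 1" "norm b = 1" "\<bar>u \<bullet> b\<bar> = 1"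
  shows "u \<in> span {b}"
proof -
  have "u = b \<or> u = - b"
    using norm_cauchy_schwarz_abs_eq[of u b] assms by auto
  then show ?thesis by (auto intro: span_base span_neg)
qed

lemma homotopic_odd_polynomial_off_poles:
  fixes Q :: "'a::euclidean_space \<Rightarrow> 'a"
  assumes Q: "polynomial_function Q" and Q_odd: "\<And>x. Q (- x) = - Q x"
    and Q_nz: "\<And>x. x \<in> sphere 0 1 \<Longrightarrow> Q x \<noteq> 0" and b: "norm b = 1"
  obtains P where
    "homotopic_with_canon (\<lambda>x. True) (sphere 0 1) (sphere 0 1) (\<lambda>x. Q x /\<^sub>R norm (Q x)) P"
    "\<And>x. P (- x) = - P x" "\<And>x. x \<in> sphere 0 1 \<Longrightarrow> x \<bullet> b = 0 \<Longrightarrow> \<bar>P x \<bullet> b\<bar> < 1"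
proof -
  let ?S = "sphere (0::'a) 1"
  obtain y where yb: "y \<bullet> b > 0"
    and y_avoids: "\<And>x. x \<in> ?S \<Longrightarrow> x \<bullet> b = 0 \<Longrightarrow> shear b y 1 (Q x) \<notin> span {b}"
    using shear_avoiding_axis[OF Q Q_odd b] Q_nz by blast
  define P where "P x = shear b y 1 (Q x) /\<^sub>R norm (shear b y 1 (Q x))" for x
  have "continuous_on UNIV Q"
    using Q continuous_on_polymonial_function by blast
  then have "continuous_on ({0..1} \<times> ?S) (\<lambda>p. Q (snd p))"
    by (rule continuous_on_compose2[OF _ continuous_on_snd]) auto
  then have "continuous_on ({0..1} \<times> ?S) (\<lambda>p. shear b y (fst p) (Q (snd p)))"
    unfolding shear_def using yb by (intro continuous_intros) auto
  moreover have "shear b y t (Q x) \<noteq> 0" if "t \<in> {0..1}" "x \<in> ?S" for t x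
    using shear_eq_0_iff[OF b yb] that Q_nz by auto
  ultimately have "homotopic_with_canon (\<lambda>x. True) ?S ?S
      (\<lambda>x. shear b y 0 (Q x) /\<^sub>R norm (shear b y 0 (Q x))) P"
    unfolding P_def
    by (intro homotopic_with_canon_normalized[where h="\<lambda>p. shear b y (fst p) (Q (snd p))", simplified])
      auto
  then have hom_QP: "homotopic_with_canon (\<lambda>x. True) ?S ?S (\<lambda>x. Q x /\<^sub>R norm (Q x)) P"
    by (simp add: shear_def)
  have P_odd: "P (- x) = - P x" for x
    by (simp add: P_def Q_odd linear_neg[OF linear_shear])
  have "\<bar>P x \<bullet> b\<bar> < 1" if "x \<in> ?S" "x \<bullet> b = 0" for x
  proof -
    have "norm (P x) = 1"
      using homotopic_with_imp_continuous_maps[OF hom_QP] that(1)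
      by (auto simp: continuous_map_def)
    then have "\<bar>P x \<bullet> b\<bar> \<le> 1" using b Cauchy_Schwarz_ineq2[of "P x" b] by simp
    moreover have "P x \<notin> span {b}"
    proof
      assume "P x \<in> span {b}"
      then have "norm (shear b y 1 (Q x)) *\<^sub>R P x \<in> span {b}" by (rule span_mul)
      then show False using y_avoids[OF that] shear_eq_0_iff[OF b yb] Q_nz[OF that(1)]
        by (simp add: P_def)
    qed
    ultimately show ?thesis
      using unit_vector_in_span_if_inner_abs_1[OF \<open>norm (P x) = 1\<close> b] by fastforce
  qed
  with hom_QP P_odd show ?thesis using that by blast
qed

lemma homotopic_odd_sphere_map_equatorial:
  fixes K :: "'a::euclidean_space \<Rightarrow> 'a"
  assumes K: "continuous_on (sphere 0 1) K" "K \<in> sphere 0 1 \<rightarrow> sphere 0 1"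
    and K_odd: "\<And>x. x \<in> sphere 0 1 \<Longrightarrow> K (- x) = - K x" and b: "norm b = 1"
  obtains G where "homotopic_with_canon (\<lambda>x. True) (sphere 0 1) (sphere 0 1) K G"
    "\<And>x. x \<in> sphere 0 1 \<Longrightarrow> G (- x) = - G x"
    "\<And>x. x \<in> sphere 0 1 \<Longrightarrow> x \<bullet> b = 0 \<Longrightarrow> G x \<bullet> b = 0"
proof -
  let ?S = "sphere (0::'a) 1"
  obtain Q where Q: "polynomial_function Q" and Q_odd: "\<And>x. Q (- x) = - Q x"
    and Q_close: "\<And>x. x \<in> ?S \<Longrightarrow> norm (K x - Q x) < 1"
    using odd_polynomial_approximation[OF compact_sphere K(1) _ K_odd, of 1] by auto
  have Q_nz: "Q x \<noteq> 0" if "x \<in> ?S" for x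
    using Q_close[OF that] K(2) that by (auto simp: Pi_iff)
  have "continuous_on ?S Q"
    using Q continuous_on_polymonial_function by blast
  then have hom_KQ: "homotopic_with_canon (\<lambda>x. True) ?S ?S K (\<lambda>x. Q x /\<^sub>R norm (Q x))"
    using homotopic_sphere_map_normalized_approximation[OF K _ Q_close] by blast
  obtain P where hom_QP: "homotopic_with_canon (\<lambda>x. True) ?S ?S (\<lambda>x. Q x /\<^sub>R norm (Q x)) P"
    and P_odd: "\<And>x. P (- x) = - P x" and off_poles: "\<And>x. x \<in> ?S \<Longrightarrow> x \<bullet> b = 0 \<Longrightarrow> \<bar>P x \<bullet> b\<bar> < 1"
    using homotopic_odd_polynomial_off_poles[OF Q Q_odd Q_nz b] by blast
  have P: "continuous_on ?S P" "P \<in> ?S \<rightarrow> ?S"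
    using homotopic_with_imp_continuous_maps[OF hom_QP] by (auto simp: continuous_map_subtopology_eu)
  have "compact (?S \<inter> {x. x \<bullet> b = 0})"
    by (intro compact_Int_closed compact_sphere closed_Collect_eq continuous_intros)
  then obtain G where hom_PG: "homotopic_with_canon (\<lambda>x. True) ?S ?S P G"
    and "\<And>x. x \<in> ?S \<Longrightarrow> G (- x) = - G x" "\<And>x. x \<in> ?S \<inter> {x. x \<bullet> b = 0} \<Longrightarrow> G x \<bullet> b = 0"
    using homotopic_odd_map_flattening_equator[OF P P_odd _ _ b, of "?S \<inter> {x. x \<bullet> b = 0}"]
      off_poles by auto
  moreover have "homotopic_with_canon (\<lambda>x. True) ?S ?S K G"
    using homotopic_with_trans[OF homotopic_with_trans[OF hom_KQ hom_QP] hom_PG] .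
  ultimately show ?thesis using that by blast
qed

section \<open>The Borsuk-Ulam theorem\<close>

lemma homotopic_antipodal_map_equatorial:
  assumes dim: "DIM('a::euclidean_space) = Suc (Suc n)"
    and k: "continuous_map (nsphere (Suc n)) (nsphere (Suc n)) k" and k_odd: "antipodal (Suc n) k"
  obtains k' where "homotopic_with (\<lambda>x. True) (nsphere (Suc n)) (nsphere (Suc n)) k k'"
    "antipodal (Suc n) k'" "k' \<in> topspace (nsphere n) \<rightarrow> topspace (nsphere n)"
proof -
  let ?m = "Suc n"
  let ?S = "sphere (0::'a) 1"
  obtain e :: "nat \<Rightarrow> 'a" where e: "bij_betw e {..?m} Basis"
    using obtain_Basis_enumeration[OF dim] by blast
  let ?from = "from_coords e ?m" and ?coords = "coords e ?m"
  define K where "K = ?from \<circ> k \<circ> ?coords"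
  have "continuous_map (top_of_set ?S) (top_of_set ?S) K"
    unfolding K_def using continuous_map_coords[OF e] k continuous_map_from_coords[OF e]
    by (intro continuous_map_compose)
  then have K: "continuous_on ?S K" "K \<in> ?S \<rightarrow> ?S"
    by (auto simp: continuous_map_subtopology_eu)
  have K_odd: "K (- v) = - K v" if "v \<in> ?S" for v
    using k_odd coords_in_nsphere[OF e that]
    by (simp add: K_def coords_neg from_coords_neg antipodal_def)
  have "e ?m \<in> Basis" using e by (auto simp: bij_betw_def)
  then obtain G where hom_KG: "homotopic_with_canon (\<lambda>x. True) ?S ?S K G"
    and G_odd: "\<And>x. x \<in> ?S \<Longrightarrow> G (- x) = - G x"
    and G_equator: "\<And>x. x \<in> ?S \<Longrightarrow> x \<bullet> e ?m = 0 \<Longrightarrow> G x \<bullet> e ?m = 0"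
    using homotopic_odd_sphere_map_equatorial[OF K K_odd] by (metis norm_Basis)
  define k' where "k' = ?coords \<circ> (G \<circ> ?from)"
  have hom: "homotopic_with (\<lambda>x. True) (nsphere ?m) (nsphere ?m) (?coords \<circ> (K \<circ> ?from)) k'"
    unfolding k'_def
    by (intro homotopic_with_compose_continuous_map_left[OF _ continuous_map_coords[OF e]]
        homotopic_with_compose_continuous_map_right[OF hom_KG continuous_map_from_coords[OF e]]) auto
  have "k x = (?coords \<circ> (K \<circ> ?from)) x" if x: "x \<in> topspace (nsphere ?m)" for x
  proof -
    have "k x \<in> topspace (nsphere ?m)"
      using k x by (auto simp: continuous_map_def)
    with x show ?thesis
      by (simp add: K_def coords_from_coords[OF e] topspace_nsphere_iff)
  qed
  then have "homotopic_with (\<lambda>x. True) (nsphere ?m) (nsphere ?m) k k'"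
    by (intro homotopic_with_eq[OF hom]) auto
  moreover have "antipodal ?m k'"
    using G_odd from_coords_in_sphere[OF e]
    by (simp add: antipodal_def k'_def from_coords_neg coords_neg)
  moreover have "k' \<in> topspace (nsphere n) \<rightarrow> topspace (nsphere n)"
  proof
    fix x assume x: "x \<in> topspace (nsphere n)"
    have G_sphere: "G v \<in> ?S" if "v \<in> ?S" for v
      using homotopic_with_imp_continuous_maps[OF hom_KG] that by (auto simp: continuous_map_def)
    have "?from x \<in> ?S"
      using from_coords_in_sphere[OF e topspace_nsphere_mono[OF _ x]] by simp
    moreover have "?from x \<bullet> e ?m = 0"
      using inner_from_coords_equator[OF e x] .
    ultimately show "k' x \<in> topspace (nsphere n)"
      unfolding k'_def o_def using G_sphere G_equator by (intro coords_in_nsphere_equator[OF e]) auto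
  qed
  ultimately show ?thesis using that by blast
qed

lemma odd_Brouwer_degree2_antipodal_Suc:
  assumes dim: "DIM('a::euclidean_space) = Suc (Suc n)"
    and IH: "\<And>f. continuous_map (nsphere n) (nsphere n) f \<Longrightarrow> antipodal n f \<Longrightarrow> odd (Brouwer_degree2 n f)"
    and k: "continuous_map (nsphere (Suc n)) (nsphere (Suc n)) k" and k_odd: "antipodal (Suc n) k"
  shows "odd (Brouwer_degree2 (Suc n) k)"
proof -
  obtain k' where hom: "homotopic_with (\<lambda>x. True) (nsphere (Suc n)) (nsphere (Suc n)) k k'"
    and k'_odd: "antipodal (Suc n) k'" and k'_equator: "k' \<in> topspace (nsphere n) \<rightarrow> topspace (nsphere n)"
    using homotopic_antipodal_map_equatorial[OF dim k k_odd] by blast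
  have k': "continuous_map (nsphere (Suc n)) (nsphere (Suc n)) k'"
    using homotopic_with_imp_continuous_maps[OF hom] by simp
  have "odd (Brouwer_degree2 n k')"
    using IH continuous_map_nsphere_restrict[OF k' _ k'_equator] antipodal_mono[OF k'_odd] by simp
  then have "odd (Brouwer_degree2 (Suc n) k')"
    by (rule odd_Brouwer_degree2_Suc[OF k' k'_odd k'_equator])
  then show ?thesis
    using Brouwer_degree2_homotopic[OF hom] by simp
qed

text \<open>Each induction step needs a euclidean type of dimension \<open>n + 2\<close>, so the induction is unrolled
  for the dimensions used below.\<close>

lemma odd_Brouwer_degree2_antipodal:
  assumes "n \<le> 2" "continuous_map (nsphere n) (nsphere n) f" "antipodal n f"
  shows "odd (Brouwer_degree2 n f)"
proof -
  have deg1: "odd (Brouwer_degree2 1 f)"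
    if "continuous_map (nsphere 1) (nsphere 1) f" "antipodal 1 f" for f
    using odd_Brouwer_degree2_antipodal_Suc[where 'a="real^2", OF _ odd_Brouwer_degree2_antipodal_0]
      that by simp
  have deg2: "odd (Brouwer_degree2 2 f)"
    if "continuous_map (nsphere 2) (nsphere 2) f" "antipodal 2 f" for f
    using odd_Brouwer_degree2_antipodal_Suc[where 'a="real^3" and n=1, OF _ deg1]
      that by (simp add: numeral_2_eq_2)
  have "n = 0 \<or> n = 1 \<or> n = 2" using assms(1) by auto
  then show ?thesis
    using assms(2,3) odd_Brouwer_degree2_antipodal_0 deg1 deg2 by auto
qed

lemma no_antipodal_map_nsphere_Suc:
  assumes deg: "\<And>f. continuous_map (nsphere n) (nsphere n) f \<Longrightarrow> antipodal n f \<Longrightarrow> odd (Brouwer_degree2 n f)"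
    and g: "continuous_map (nsphere (Suc n)) (nsphere n) g" and g_odd: "antipodal (Suc n) g"
  shows False
proof -
  have g': "continuous_map (nsphere (Suc n)) (nsphere (Suc n)) g"
    using continuous_map_nsphere_mono[OF g] by simp
  have g_into: "g \<in> topspace (nsphere (Suc n)) \<rightarrow> topspace (nsphere n)"
    using g by (auto simp: continuous_map_def)
  then have equator: "g \<in> topspace (nsphere n) \<rightarrow> topspace (nsphere n)"
    using topspace_nsphere_mono[of n "Suc n"] by auto
  have "odd (Brouwer_degree2 (Suc n) g)"
    using odd_Brouwer_degree2_Suc[OF g' g_odd equator] deg
      continuous_map_nsphere_restrict[OF g' _ equator] antipodal_mono[OF g_odd] by simp
  moreover have "Brouwer_degree2 (Suc n) g = 0"
  proof (rule Brouwer_degree2_nonsurjective[OF g'])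
    define p where "p = (\<lambda>i. if i = Suc n then 1 else (0::real))"
    have "p \<in> topspace (nsphere (Suc n))"
      by (auto simp: topspace_nsphere_iff p_def if_distrib[of "\<lambda>x. x ^ 2"] cong: if_cong)
    moreover have "p \<notin> topspace (nsphere n)"
      by (simp add: topspace_nsphere_iff p_def)
    ultimately show "g ` topspace (nsphere (Suc n)) \<noteq> topspace (nsphere (Suc n))"
      using g_into funcset_image by blast
  qed
  ultimately show False by simp
qed

corollary Borsuk_Ulam_nsphere_3:
  assumes "m < 3" "continuous_map (nsphere 3) (nsphere m) g" "antipodal 3 g"
  shows False
  using no_antipodal_map_nsphere_Suc[of 2 g] odd_Brouwer_degree2_antipodal[of 2]
    continuous_map_nsphere_mono[OF assms(2), of 2] assms
  by (simp add: numeral_3_eq_3)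

section \<open>The \<open>\<int>\<^sub>2\<close>-index of \<open>S\<^sup>1 \<times> S\<^sup>3\<close>\<close>

lemma ind_Z2_eqI:
  assumes "continuous_map X (nsphere n) f" "\<And>x. x \<in> topspace X \<Longrightarrow> f (tau x) = (\<lambda>i. - f x i)"
    and "\<And>m f. m < n \<Longrightarrow> continuous_map X (nsphere m) f \<Longrightarrow>
           \<forall>x\<in>topspace X. f (tau x) = (\<lambda>i. - f x i) \<Longrightarrow> False"
  shows "ind_Z2 X tau = n"
  unfolding ind_Z2_def using assms by (intro Least_equality) (auto simp: not_less[symmetric])

lemma equivariant_map_to_nsphere_from_sphere:
  fixes h :: "'b \<Rightarrow> 'a::euclidean_space"
  assumes dim: "DIM('a) = Suc n" and h: "continuous_map X (top_of_set (sphere 0 1)) h"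
    and h_odd: "\<And>x. x \<in> topspace X \<Longrightarrow> h (tau x) = - h x"
  obtains f where "continuous_map X (nsphere n) f" "\<And>x. x \<in> topspace X \<Longrightarrow> f (tau x) = (\<lambda>i. - f x i)"
proof -
  obtain e :: "nat \<Rightarrow> 'a" where e: "bij_betw e {..n} Basis"
    using obtain_Basis_enumeration[OF dim] by blast
  show ?thesis
  proof (rule that)
    show "continuous_map X (nsphere n) (coords e n \<circ> h)"
      using h continuous_map_coords[OF e] by (rule continuous_map_compose)
    show "(coords e n \<circ> h) (tau x) = (\<lambda>i. - (coords e n \<circ> h) x i)" if "x \<in> topspace X" for x
      using h_odd[OF that] by (simp add: coords_neg)
  qed
qed

lemma no_equivariant_map_to_nsphere_0:
  assumes X: "connected_space X" and p: "p \<in> topspace X" "tau p \<in> topspace X"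
    and f: "continuous_map X (nsphere 0) f" and f_odd: "\<forall>x\<in>topspace X. f (tau x) = (\<lambda>i. - f x i)"
  shows False
proof -
  define g where "g x = f x 0" for x
  have "continuous_map X euclideanreal g"
    unfolding g_def using continuous_map_compose[OF f continuous_map_nsphere_projection]
    by (simp add: o_def)
  then have "connectedin euclideanreal (g ` topspace X)"
    by (rule connectedin_continuous_map_image) (simp add: connectedin_topspace X)
  then have conn: "connected (g ` topspace X)" by simp
  have g_sign: "g x = 1 \<or> g x = -1" if "x \<in> topspace X" for x
  proof -
    have "f x \<in> topspace (nsphere 0)" using f that by (auto simp: continuous_map_def)
    then show ?thesis by (simp add: g_def topspace_nsphere_iff power2_eq_1_iff)
  qed
  have "g (tau p) = - g p" using f_odd p by (simp add: g_def)
  \<comment> \<open>so \<open>g\<close> takes both values \<open>\<plusminus>1\<close> on a connected set, hence also the value \<open>0\<close>\<close>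
  then have "0 \<in> g ` topspace X"
    using conn g_sign[OF p(1)] p unfolding connected_iff_interval
    by (smt (verit, best) image_eqI)
  then show False using g_sign by force
qed

lemma no_equivariant_map_below_nsphere_3:
  assumes j: "continuous_map (nsphere 3) X j"
    and j_equivariant: "\<And>x. x \<in> topspace (nsphere 3) \<Longrightarrow> tau (j x) = j (\<lambda>i. - x i)"
    and "m < 3" and f: "continuous_map X (nsphere m) f"
    and f_odd: "\<forall>x\<in>topspace X. f (tau x) = (\<lambda>i. - f x i)"
  shows False
proof (rule Borsuk_Ulam_nsphere_3)
  show "continuous_map (nsphere 3) (nsphere m) (f \<circ> j)"
    using j f by (rule continuous_map_compose)
  show "antipodal 3 (f \<circ> j)"
    using j f_odd j_equivariant by (auto simp: antipodal_def continuous_map_def simp flip: j_equivariant)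
qed fact

lemma topspace_S1S3: "topspace S1S3 = sphere 0 1 \<times> sphere 0 1"
  by (simp add: S1S3_def)

lemma S1S3_eq_prod_topology: "S1S3 = prod_topology (top_of_set (sphere 0 1)) (top_of_set (sphere 0 1))"
  by (simp add: S1S3_def prod_topology_subtopology subtopology_subtopology Times_Int_Times)

lemma connected_space_S1S3: "connected_space S1S3"
  unfolding S1S3_def
  by (intro connected_space_subtopology) (simp add: connected_Times connected_sphere)

lemma ind_Z2_S1S3_eq_1:
  assumes tau: "\<And>z. fst (tau z) = - fst z" and p: "p \<in> topspace S1S3" "tau p \<in> topspace S1S3"
  shows "ind_Z2 S1S3 tau = 1"
proof -
  have "DIM(complex) = Suc 1" by simp
  moreover have "continuous_map S1S3 (top_of_set (sphere 0 1)) fst"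
    unfolding S1S3_eq_prod_topology by (rule continuous_map_fst)
  ultimately obtain f where "continuous_map S1S3 (nsphere 1) f"
    "\<And>x. x \<in> topspace S1S3 \<Longrightarrow> f (tau x) = (\<lambda>i. - f x i)"
    using equivariant_map_to_nsphere_from_sphere tau by metis
  then show ?thesis
    using no_equivariant_map_to_nsphere_0[of S1S3 p tau, OF connected_space_S1S3 p]
    by (intro ind_Z2_eqI) auto
qed

lemma ind_Z2_S1S3_eq_3:
  assumes tau: "\<And>z. snd (tau z) = - snd z" "\<And>v. tau (1, v) = (1, - v)"
  shows "ind_Z2 S1S3 tau = 3"
proof -
  have "DIM(real^4) = Suc 3" by simp
  moreover have "continuous_map S1S3 (top_of_set (sphere 0 1)) snd"
    unfolding S1S3_eq_prod_topology by (rule continuous_map_snd)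
  ultimately obtain f where f: "continuous_map S1S3 (nsphere 3) f"
    "\<And>x. x \<in> topspace S1S3 \<Longrightarrow> f (tau x) = (\<lambda>i. - f x i)"
    using equivariant_map_to_nsphere_from_sphere tau by metis
  obtain e :: "nat \<Rightarrow> real^4" where e: "bij_betw e {..3} Basis"
    using obtain_Basis_enumeration[where 'a="real^4" and n=3] by auto
  \<comment> \<open>\<open>tau\<close> preserves the fibre \<open>{1} \<times> S\<^sup>3\<close> and acts on it antipodally\<close>
  have j: "continuous_map (nsphere 3) S1S3 (\<lambda>x. (1, from_coords e 3 x))"
    unfolding S1S3_eq_prod_topology
    by (intro continuous_map_pairedI continuous_map_from_coords[OF e]) simp
  have j_equivariant: "tau (1, from_coords e 3 x) = (1, from_coords e 3 (\<lambda>i. - x i))" for x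
    by (simp add: tau from_coords_neg)
  show ?thesis
    by (rule ind_Z2_eqI[OF f no_equivariant_map_below_nsphere_3[OF j j_equivariant]])
qed

lemma refl_self: "norm u = 1 \<Longrightarrow> refl u u = - u"
  by (simp add: refl_def norm_eq_1 scaleR_2[symmetric] algebra_simps)

theorem mainTheorem9:
  fixes u :: "real^4"
  assumes "norm u = 1"
  shows "ind_Z2 S1S3 tau_a = 1 \<and> ind_Z2 S1S3 (tau_b u) = 1 \<and>
         ind_Z2 S1S3 tau_c = 3 \<and> ind_Z2 S1S3 tau_d = 3"
proof (intro conjI)
  have u: "(1, u) \<in> topspace S1S3" "(-1, u) \<in> topspace S1S3" "(-1, - u) \<in> topspace S1S3"
    using assms by (auto simp: topspace_S1S3)
  have "tau_b u (1, u) = (-1, - u)"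
    using assms by (simp add: tau_b_def refl_self)
  then show "ind_Z2 S1S3 (tau_b u) = 1"
    using u by (intro ind_Z2_S1S3_eq_1[of _ "(1, u)"]) (auto simp: tau_b_def split_beta)
  show "ind_Z2 S1S3 tau_a = 1"
    using u by (intro ind_Z2_S1S3_eq_1[of _ "(1, u)"]) (auto simp: tau_a_def split_beta)
  show "ind_Z2 S1S3 tau_c = 3"
    by (intro ind_Z2_S1S3_eq_3) (auto simp: tau_c_def split_beta)
  show "ind_Z2 S1S3 tau_d = 3"
    by (intro ind_Z2_S1S3_eq_3) (auto simp: tau_d_def split_beta)
qed

end
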